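(* Fix $p\in(0,1)$. Under the Alternating Path Randomized Design, let $\mathcal{P}_i=(v_{i,1},\dots,v_{i,k(i)+1})$ be a path component (not a cycle), write $k=k(i)$ and $y_j=Y_{v_{i,j},v_{i,j+1}}$. Then $\mathrm{Var}(\hat\Gamma_i)\le\tilde\sigma_i^2$, where \[\tilde\sigma_i^2:=\Big(\frac1p+1\Big)\sum_{j=1}^{k}y_j^2+\sum_{j=2}^{k-1}y_j^2+2\sum_{\substack{1\le j\le k-2\\ j+2\le q\le k}}p^{q-j-1}y_jy_q.\] Moreover, with $\mathbb{P}(W_{i,j}=1)=p/(p+1)$ and $\mathbb{P}(W_{i,j}=1,W_{i,q}=1)=(p^2-(-p)^{q-j+1})/(p+1)^2$, the statistic \[\hat\sigma_i^2:=\Big(\frac1p+1\Big)\sum_{j=1}^{k}\frac{W_{i,j}y_j^2}{\mathbb{P}(W_{i,j}=1)}+\sum_{j=2}^{k-1}\frac{W_{i,j}y_j^2}{\mathbb{P}(W_{i,j}=1)}+2\sum_{\substack{1\le j\le k-2\\ j+2\le q\le k}}p^{q-j-1}\frac{y_jy_q\,W_{i,j}W_{i,q}}{\mathbb{P}(W_{i,j}=1,W_{i,q}=1)}\] satisfies $\mathbb{E}[\hat\sigma_i^2]=\tilde\sigma_i^2$.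
   Context: Setting: $2N$ agents; $\mathbb{M}^t,\mathbb{M}^c$ are one-to-one matchings (sets of unordered pairs of distinct agents, each agent in at most one pair); each pair $(a,b)$ has a fixed real potential outcome $Y_{a,b}$. The disagreement set $\triangle\mathbb{M}^{(t,c)}=(\mathbb{M}^t\cup\mathbb{M}^c)\setminus(\mathbb{M}^t\cap\mathbb{M}^c)$, viewed as a graph, has connected components, each an alternating path or cycle: a sequence $(v_{i,1},\dots,v_{i,k(i)+1})$ whose consecutive pairs $e_{i,j}=(v_{i,j},v_{i,j+1})$ are its edges, alternating between $\triangle\mathbb{M}^{(t,c)}_t=\triangle\mathbb{M}^{(t,c)}\cap\mathbb{M}^t$ and $\triangle\mathbb{M}^{(t,c)}_c=\triangle\mathbb{M}^{(t,c)}\cap\mathbb{M}^c$; a path if $v_{i,1}\ne v_{i,k(i)+1}$. Alternating Path Randomized Design with parameter $p$ on a path component: $\mathbb{P}(W_{i,1}=1)=p/(1+p)$ and for $2\le j\le k(i)$, conditionally on $W_{i,1},\dots,W_{i,j-1}$, $W_{i,j}=1$ with probability $p$ if $W_{i,j-1}=0$ and $W_{i,j}=0$ if $W_{i,j-1}=1$ (components are randomized independently). Path-level estimator $\hat\Gamma_i=\sum_{j:\,e_{i,j}\in\triangle\mathbb{M}^{(t,c)}_t}\frac{W_{i,j}Y_{e_{i,j}}}{\mathbb{P}(W_{i,j}=1)}-\sum_{j:\,e_{i,j}\in\triangle\mathbb{M}^{(t,c)}_c}\frac{W_{i,j}Y_{e_{i,j}}}{\mathbb{P}(W_{i,j}=1)}$.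 Note $\hat\sigma_i^2$ only involves outcomes of realized edges ($W=1$). *)

theory Defs
  imports "HOL-Probability.Probability"
begin

text \<open>Alternating Path Randomized Design on a path with k edges.
  A realisation is a list w of k booleans; W_j (1-based, j = 1..k) is w ! (j - 1).\<close>

fun apd_chain :: "real \<Rightarrow> nat \<Rightarrow> bool \<Rightarrow> bool list pmf" where
  "apd_chain p 0 prev = return_pmf []"
| "apd_chain p (Suc n) prev =
     do { b \<leftarrow> (if prev then return_pmf False else bernoulli_pmf p);
          bs \<leftarrow> apd_chain p n b;
          return_pmf (b # bs) }"

definition apd_path :: "real \<Rightarrow> nat \<Rightarrow> bool list pmf" where
  "apd_path p k =
     (if k = 0 then return_pmf []
      else do { b \<leftarrow> bernoulli_pmf (p / (1 + p));
                bs \<leftarrow> apd_chain p (k - 1) b;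
                return_pmf (b # bs) })"

definition Wi :: "bool list \<Rightarrow> nat \<Rightarrow> real" where
  "Wi w j = (if w ! (j - 1) then 1 else 0)"

definition pr1 :: "real \<Rightarrow> nat \<Rightarrow> nat \<Rightarrow> real" where
  "pr1 p k j = measure_pmf.prob (apd_path p k) {w. w ! (j - 1)}"

definition pr2 :: "real \<Rightarrow> nat \<Rightarrow> nat \<Rightarrow> nat \<Rightarrow> real" where
  "pr2 p k j q = measure_pmf.prob (apd_path p k) {w. w ! (j - 1) \<and> w ! (q - 1)}"

text \<open>Path-level estimator: inT j says edge e_j lies in the treatment matching
  (otherwise in the control matching); y j is the outcome of edge e_j.\<close>
definition Gamma_hat :: "real \<Rightarrow> nat \<Rightarrow> (nat \<Rightarrow> bool) \<Rightarrow> (nat \<Rightarrow> real) \<Rightarrow> bool list \<Rightarrow> real" where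
  "Gamma_hat p k inT y w =
     (\<Sum>j\<in>{j\<in>{1..k}. inT j}. Wi w j * y j / pr1 p k j)
   - (\<Sum>j\<in>{j\<in>{1..k}. \<not> inT j}. Wi w j * y j / pr1 p k j)"

definition sigma_tilde :: "real \<Rightarrow> nat \<Rightarrow> (nat \<Rightarrow> real) \<Rightarrow> real" where
  "sigma_tilde p k y =
     (1 / p + 1) * (\<Sum>j=1..k. (y j)\<^sup>2) + (\<Sum>j=2..k-1. (y j)\<^sup>2)
   + 2 * (\<Sum>j=1..k-2. \<Sum>q=j+2..k. p ^ (q - j - 1) * y j * y q)"

definition sigma_hat :: "real \<Rightarrow> nat \<Rightarrow> (nat \<Rightarrow> real) \<Rightarrow> bool list \<Rightarrow> real" where
  "sigma_hat p k y w =
     (1 / p + 1) * (\<Sum>j=1..k. Wi w j * (y j)\<^sup>2 / pr1 p k j)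
   + (\<Sum>j=2..k-1. Wi w j * (y j)\<^sup>2 / pr1 p k j)
   + 2 * (\<Sum>j=1..k-2. \<Sum>q=j+2..k.
            p ^ (q - j - 1) * (y j * y q * Wi w j * Wi w q) / pr2 p k j q)"

end

theory Submission
  imports Defs
begin

text \<open>Along a path the design is a stationary two-state Markov chain: a treated edge is followed
  by a control edge, a control edge by a treated one with probability p, and the stationary law
  P(W = 1) = p / (1 + p) is the initial one. The transition matrix has eigenvalues 1 and -p, so
  Cov(W_j, W_q) = p (-p)^|j-q| / (1 + p)^2. The signs of the estimator alternate along the path as
  well, which turns the covariances into p^|j-q|: the variance is (1/p) \<Sum> p^|j-q| y_j y_q, a
  Kac-Murdock-Szego quadratic form, and p times the bound exceeds this form by
  p \<Sum> (y_j - y_(j+1))^2 when k \<ge> 2. Unbiasedness of the variance estimator is linearity of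
  expectation, once every probability in its denominators is known to be positive.\<close>

lemma measure_pmf_prob_bind:
  "measure_pmf.prob (M \<bind> F) A = measure_pmf.expectation M (\<lambda>x. measure_pmf.prob (F x) A)"
  unfolding measure_pmf_bind
  by (rule measure_pmf.measure_bind[where N = "count_space UNIV"])
    (auto simp: measure_pmf_in_subprob_algebra)

lemma measure_pmf_variance_sum:
  fixes X :: "'i \<Rightarrow> 'a \<Rightarrow> real"
  assumes "finite (set_pmf M)"
  shows "measure_pmf.variance M (\<lambda>x. \<Sum>j\<in>J. X j x)
       = (\<Sum>j\<in>J. \<Sum>q\<in>J. measure_pmf.expectation M (\<lambda>x. X j x * X q x)
                         - measure_pmf.expectation M (X j) * measure_pmf.expectation M (X q))"
proof -
  have int: "integrable M f" for f :: "'a \<Rightarrow> real"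
    using assms by (rule integrable_measure_pmf_finite)
  have "measure_pmf.variance M (\<lambda>x. \<Sum>j\<in>J. X j x)
      = measure_pmf.expectation M (\<lambda>x. (\<Sum>j\<in>J. X j x)\<^sup>2)
        - (measure_pmf.expectation M (\<lambda>x. \<Sum>j\<in>J. X j x))\<^sup>2"
    by (rule measure_pmf.variance_eq) (rule int)+
  also have "\<dots> = (\<Sum>j\<in>J. \<Sum>q\<in>J. measure_pmf.expectation M (\<lambda>x. X j x * X q x))
        - (\<Sum>j\<in>J. \<Sum>q\<in>J. measure_pmf.expectation M (X j) * measure_pmf.expectation M (X q))"
    by (simp add: int integral_sum power2_eq_square sum_product)
  finally show ?thesis
    by (simp add: sum_subtractf)
qed

lemma alternating_iff_even:
  fixes P :: "nat \<Rightarrow> bool"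
  assumes alt: "\<And>i. a \<le> i \<Longrightarrow> i < b \<Longrightarrow> (P (i + 1) \<longleftrightarrow> \<not> P i)"
    and "a \<le> j" "j \<le> q" "q \<le> b"
  shows "(P q \<longleftrightarrow> P j) \<longleftrightarrow> even (q - j)"
  using assms(3,4)
proof (induction q)
  case 0
  then show ?case by simp
next
  case (Suc q)
  show ?case
  proof (cases "j = Suc q")
    case False
    then have "j \<le> q"
      using Suc.prems by simp
    then show ?thesis
      using Suc alt[of q] assms(2) by (auto simp: Suc_diff_le)
  qed simp
qed

text \<open>The n-step transition probability P(W_(j+n) = 1 | W_j = b) of the design, in closed form.\<close>

definition apd_trans :: "real \<Rightarrow> bool \<Rightarrow> nat \<Rightarrow> real" where
  "apd_trans p b n = (if b then (p + (-p) ^ n) / (1 + p) else (p - p * (-p) ^ n) / (1 + p))"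

lemma apd_trans_0: "0 \<le> p \<Longrightarrow> apd_trans p b 0 = (if b then 1 else 0)"
  by (simp add: apd_trans_def)

lemma apd_trans_Suc:
  "apd_trans p True (Suc n) = apd_trans p False n"
  "apd_trans p False (Suc n) = p * apd_trans p True n + (1 - p) * apd_trans p False n"
  unfolding apd_trans_def by (simp_all add: add_divide_distrib[symmetric] algebra_simps)

lemma apd_trans_stationary:
  "0 \<le> p \<Longrightarrow>
    p / (1 + p) * apd_trans p True n + (1 - p / (1 + p)) * apd_trans p False n = p / (1 + p)"
  unfolding apd_trans_def by (simp add: divide_simps) (simp add: algebra_simps)

lemma apd_trans_True_pos:
  assumes "0 < p" "p < 1" "n \<noteq> 1"
  shows "0 < apd_trans p True n"
proof (cases "n = 0")
  case False
  then have "p ^ n \<le> p ^ 2"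
    using assms by (intro power_decreasing) auto
  also have "\<dots> < p"
    using assms by (simp add: power2_eq_square)
  finally have "p ^ n < p" .
  moreover have "- (p ^ n) \<le> (-p) ^ n"
    using abs_ge_minus_self[of "(-p) ^ n"] assms(1) by (simp add: power_abs)
  ultimately show ?thesis
    using assms(1) by (simp add: apd_trans_def)
qed (use assms in \<open>simp add: apd_trans_0\<close>)

lemma prob_apd_chain_Suc:
  assumes "0 \<le> p" "p \<le> 1"
  shows "measure_pmf.prob (apd_chain p (Suc n) b) A =
    (if b then measure_pmf.prob (apd_chain p n False) {w. False # w \<in> A}
     else p * measure_pmf.prob (apd_chain p n True) {w. True # w \<in> A}
        + (1 - p) * measure_pmf.prob (apd_chain p n False) {w. False # w \<in> A})"
  using assms by (simp add: map_pmf_def[symmetric] measure_pmf_prob_bind vimage_def)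

lemma prob_apd_chain_Cons_nth:
  assumes "0 \<le> p" "p \<le> 1" "m \<le> n"
  shows "measure_pmf.prob (apd_chain p n b) {w. (b # w) ! m} = apd_trans p b m"
  using assms(3)
proof (induction n arbitrary: b m)
  case 0
  then show ?case using assms(1) by (simp add: apd_trans_0)
next
  case (Suc n)
  then show ?case
    using assms(1,2)
    by (cases m) (auto simp: prob_apd_chain_Suc apd_trans_Suc apd_trans_0 simp del: apd_chain.simps)
qed

lemma prob_apd_chain_nth_nth:
  assumes "0 \<le> p" "p \<le> 1" "i \<le> m" "m < n"
  shows "measure_pmf.prob (apd_chain p n b) {w. w ! i \<and> w ! m}
       = apd_trans p b (Suc i) * apd_trans p True (m - i)"
  using assms(3,4)
proof (induction n arbitrary: b i m)
  case 0
  then show ?case by simp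
next
  case (Suc n)
  show ?case
  proof (cases "i = 0")
    case True
    then show ?thesis
      using Suc.prems assms(1,2)
      by (simp add: prob_apd_chain_Suc prob_apd_chain_Cons_nth apd_trans_Suc apd_trans_0
          del: apd_chain.simps)
  next
    case False
    then obtain i' m' where "i = Suc i'" "m = Suc m'"
      using Suc.prems by (metis Suc_le_D not0_implies_Suc)
    then show ?thesis
      using Suc.prems Suc.IH assms(1,2)
      by (simp add: prob_apd_chain_Suc apd_trans_Suc algebra_simps del: apd_chain.simps)
  qed
qed

lemma apd_path_Suc:
  "apd_path p (Suc n) = bernoulli_pmf (p / (1 + p)) \<bind> (\<lambda>b. map_pmf (Cons b) (apd_chain p n b))"
  by (simp add: apd_path_def map_pmf_def)

lemma prob_apd_path_nth_nth:
  assumes "0 \<le> p" "p \<le> 1" "i \<le> m" "m < k"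
  shows "measure_pmf.prob (apd_path p k) {w. w ! i \<and> w ! m} = p / (1 + p) * apd_trans p True (m - i)"
proof -
  define r where "r = p / (1 + p)"
  obtain n where k: "k = Suc n"
    using assms(4) by (cases k) auto
  have r_bounds: "0 \<le> r" "r \<le> 1"
    using assms(1) by (auto simp: r_def)
  show ?thesis
  proof (cases "i = 0")
    case True
    then show ?thesis
      using assms k r_bounds
      by (simp add: apd_path_Suc measure_pmf_prob_bind prob_apd_chain_Cons_nth flip: r_def)
  next
    case False
    then obtain i' m' where "i = Suc i'" "m = Suc m'"
      using assms(3) by (metis Suc_le_D not0_implies_Suc)
    then have "measure_pmf.prob (apd_path p k) {w. w ! i \<and> w ! m}
        = (r * apd_trans p True i + (1 - r) * apd_trans p False i) * apd_trans p True (m - i)"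
      using assms k r_bounds
      by (simp add: apd_path_Suc measure_pmf_prob_bind prob_apd_chain_nth_nth algebra_simps
          flip: r_def)
    then show ?thesis
      using apd_trans_stationary[OF assms(1)] by (simp add: r_def)
  qed
qed

lemma length_apd_chain: "w \<in> set_pmf (apd_chain p n b) \<Longrightarrow> length w = n"
  by (induction n arbitrary: b w) (auto split: if_splits)

lemma finite_set_pmf_apd_path: "finite (set_pmf (apd_path p k))"
proof (rule finite_subset)
  show "set_pmf (apd_path p k) \<subseteq> {w. length w = k}"
    using length_apd_chain[of _ p "k - 1"] by (cases k) (auto simp: apd_path_def)
  show "finite {w :: bool list. length w = k}"
    using finite_lists_length_eq[of "UNIV :: bool set" k] by simp
qed

lemma pr2_eq:
  assumes "0 \<le> p" "p \<le> 1" "j \<in> {1..k}" "q \<in> {1..k}"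
  shows "pr2 p k j q = p / (1 + p) * apd_trans p True (max j q - min j q)"
proof (cases "j \<le> q")
  case True
  then show ?thesis
    using assms prob_apd_path_nth_nth[of p "j - 1" "q - 1" k] by (simp add: pr2_def)
next
  case False
  have "{w. w ! (j - 1) \<and> w ! (q - 1)} = {w. w ! (q - 1) \<and> w ! (j - 1)}"
    by auto
  then show ?thesis
    using False assms prob_apd_path_nth_nth[of p "q - 1" "j - 1" k] by (simp add: pr2_def)
qed

lemma pr1_eq:
  assumes "0 \<le> p" "p \<le> 1" "j \<in> {1..k}"
  shows "pr1 p k j = p / (1 + p)"
  using pr2_eq[OF assms assms(3)] assms(1) by (simp add: pr1_def pr2_def apd_trans_0)

lemma expectation_Wi: "measure_pmf.expectation (apd_path p k) (\<lambda>w. Wi w j) = pr1 p k j"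
proof -
  have "(\<lambda>w. Wi w j) = indicator {w. w ! (j - 1)}"
    by (auto simp: Wi_def)
  then show ?thesis
    by (simp add: pr1_def)
qed

lemma expectation_Wi_Wi:
  "measure_pmf.expectation (apd_path p k) (\<lambda>w. Wi w j * Wi w q) = pr2 p k j q"
proof -
  have "(\<lambda>w. Wi w j * Wi w q) = indicator {w. w ! (j - 1) \<and> w ! (q - 1)}"
    by (auto simp: Wi_def)
  then show ?thesis
    by (simp add: pr2_def)
qed

definition kms_form :: "real \<Rightarrow> nat \<Rightarrow> (nat \<Rightarrow> real) \<Rightarrow> real" where
  "kms_form p k y = (\<Sum>j=1..k. \<Sum>q=1..k. p ^ (max j q - min j q) * y j * y q)"

lemma kms_form_Suc:
  "kms_form p (Suc k) y
     = kms_form p k y + 2 * (\<Sum>j=1..k. p ^ (Suc k - j) * y j) * y (Suc k) + (y (Suc k))\<^sup>2"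
proof -
  define c where "c = (\<Sum>j=1..k. p ^ (Suc k - j) * y j) * y (Suc k)"
  have col: "(\<Sum>j=1..k. p ^ (max j (Suc k) - min j (Suc k)) * y j * y (Suc k)) = c"
    unfolding c_def sum_distrib_right by (intro sum.cong) auto
  have row: "(\<Sum>q=1..k. p ^ (max (Suc k) q - min (Suc k) q) * y (Suc k) * y q) = c"
    unfolding c_def sum_distrib_right by (intro sum.cong) auto
  have "kms_form p (Suc k) y = kms_form p k y
      + (\<Sum>j=1..k. p ^ (max j (Suc k) - min j (Suc k)) * y j * y (Suc k))
      + (\<Sum>q=1..k. p ^ (max (Suc k) q - min (Suc k) q) * y (Suc k) * y q) + (y (Suc k))\<^sup>2"
    unfolding kms_form_def by (simp add: sum.distrib power2_eq_square)
  then show ?thesis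
    unfolding col row c_def by simp
qed

lemma sigma_tilde_Suc:
  assumes "2 \<le> k"
  shows "sigma_tilde p (Suc k) y = sigma_tilde p k y + (1 / p + 1) * (y (Suc k))\<^sup>2 + (y k)\<^sup>2
     + 2 * (\<Sum>j=1..k-1. p ^ (k - j) * y j) * y (Suc k)"
proof -
  obtain m where k: "k = Suc (Suc m)"
    using assms by (metis add_2_eq_Suc le_Suc_ex)
  let ?g = "\<lambda>j q. p ^ (q - j - 1) * y j * y q"
  have "(\<Sum>j=1..Suc m. \<Sum>q=j+2..Suc k. ?g j q)
      = (\<Sum>j=1..Suc m. (\<Sum>q=j+2..k. ?g j q) + ?g j (Suc k))"
    using k by (intro sum.cong) auto
  also have "\<dots> = (\<Sum>j=1..m. \<Sum>q=j+2..k. ?g j q) + (\<Sum>j=1..k-1. p ^ (k - j) * y j) * y (Suc k)"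
    using k by (simp add: sum.distrib sum_distrib_right distrib_right Suc_diff_le)
  finally show ?thesis
    using k by (simp add: sigma_tilde_def algebra_simps)
qed

lemma kms_form_add_sum_sq:
  assumes "0 < p" "2 \<le> k"
  shows "kms_form p k y + p * (\<Sum>j=1..k-1. (y j - y (Suc j))\<^sup>2) = p * sigma_tilde p k y"
  using assms(2)
proof (induction k rule: nat_induct_at_least)
  case base
  show ?case
    using assms(1) by (simp add: kms_form_def sigma_tilde_def numeral_2_eq_2 power2_eq_square
        field_simps)
next
  case (Suc n)
  define T where "T = (\<Sum>j=1..n-1. p ^ (n - j) * y j)"
  define S where "S = (\<Sum>j=1..n-1. (y j - y (Suc j))\<^sup>2)"
  have "(\<Sum>j=1..n. p ^ (Suc n - j) * y j) = (\<Sum>j=1..n. p * (p ^ (n - j) * y j))"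
    by (intro sum.cong) (auto simp: Suc_diff_le)
  also have "\<dots> = p * (T + y n)"
    unfolding T_def using Suc.hyps by (cases n) (auto simp: sum_distrib_left[symmetric])
  finally have kms: "kms_form p (Suc n) y = kms_form p n y + 2 * p * (T + y n) * y (Suc n) + (y (Suc n))\<^sup>2"
    by (simp add: kms_form_Suc)
  have sq: "(\<Sum>j=1..Suc n - 1. (y j - y (Suc j))\<^sup>2) = S + (y n - y (Suc n))\<^sup>2"
    unfolding S_def using Suc.hyps by (cases n) auto
  have IH: "kms_form p n y + p * S = p * sigma_tilde p n y"
    using Suc.IH by (simp add: S_def)
  have sigma: "sigma_tilde p (Suc n) y
      = sigma_tilde p n y + (1 / p + 1) * (y (Suc n))\<^sup>2 + (y n)\<^sup>2 + 2 * T * y (Suc n)"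
    unfolding T_def using Suc.hyps by (rule sigma_tilde_Suc)
  show ?case
    unfolding kms sq sigma distrib_left IH[symmetric]
    using assms(1) by (simp add: field_simps power2_eq_square)
qed

lemma kms_form_le_sigma_tilde:
  assumes "0 < p" "1 \<le> k"
  shows "kms_form p k y \<le> p * sigma_tilde p k y"
proof (cases "k = 1")
  case True
  have "p * sigma_tilde p 1 y = (y 1)\<^sup>2 + p * (y 1)\<^sup>2"
    using assms(1) by (simp add: sigma_tilde_def field_simps)
  moreover have "kms_form p 1 y = (y 1)\<^sup>2"
    by (simp add: kms_form_def power2_eq_square)
  ultimately show ?thesis
    using True assms(1) by simp
next
  case False
  then have "kms_form p k y + p * (\<Sum>j=1..k-1. (y j - y (Suc j))\<^sup>2) = p * sigma_tilde p k y"
    using assms by (intro kms_form_add_sum_sq) auto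
  moreover have "0 \<le> p * (\<Sum>j=1..k-1. (y j - y (Suc j))\<^sup>2)"
    using assms(1) by (simp add: sum_nonneg)
  ultimately show ?thesis
    by linarith
qed

lemma Gamma_hat_eq_sum:
  "Gamma_hat p k inT y w = (\<Sum>j=1..k. (if inT j then 1 else -1) * y j / pr1 p k j * Wi w j)"
  unfolding Gamma_hat_def sum.inter_filter[OF finite_atLeastAtMost] sum_subtractf[symmetric]
  by (intro sum.cong) auto

lemma variance_Gamma_hat:
  assumes "0 < p" "p \<le> 1"
    and alt: "\<And>j. 1 \<le> j \<Longrightarrow> j < k \<Longrightarrow> (inT (j + 1) \<longleftrightarrow> \<not> inT j)"
  shows "measure_pmf.variance (apd_path p k) (Gamma_hat p k inT y) = kms_form p k y / p"
proof -
  define r where "r = p / (1 + p)"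
  define s where "s j = (if inT j then 1 else -1 :: real)" for j
  define c where "c j = s j * y j / r" for j
  have r: "0 < r" "r * (1 + p) = p"
    using assms(1) by (simp_all add: r_def)
  have Gamma: "Gamma_hat p k inT y = (\<lambda>w. \<Sum>j=1..k. c j * Wi w j)"
    using pr1_eq assms(1,2) by (auto simp: Gamma_hat_eq_sum c_def s_def r_def intro!: sum.cong)
  have cov: "c j * c q * (pr2 p k j q - r * r) = p ^ (max j q - min j q) * y j * y q / p"
    if jq: "j \<in> {1..k}" "q \<in> {1..k}" for j q
  proof -
    define d where "d = max j q - min j q"
    have "(inT (max j q) \<longleftrightarrow> inT (min j q)) \<longleftrightarrow> even d"
      unfolding d_def by (rule alternating_iff_even[where a = 1 and b = k]) (use alt jq in auto)
    then have sign: "s j * s q = (-1) ^ d"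
      by (auto simp: s_def max_def minus_one_power_iff split: if_splits)
    have "pr2 p k j q = r * apd_trans p True d"
      using pr2_eq[OF _ assms(2) jq] assms(1) by (simp add: d_def r_def)
    moreover have "apd_trans p True d - r = (-p) ^ d / (1 + p)"
      by (simp add: apd_trans_def r_def diff_divide_distrib[symmetric])
    ultimately have cov_W: "pr2 p k j q - r * r = r * ((-p) ^ d / (1 + p))"
      by (metis right_diff_distrib)
    have "c j * c q * (pr2 p k j q - r * r) = (s j * s q) * (-p) ^ d * y j * y q / (r * (1 + p))"
      unfolding cov_W c_def using r assms(1) by (simp add: field_simps)
    also have "\<dots> = ((-1) * (-p)) ^ d * y j * y q / p"
      unfolding sign r(2) power_mult_distrib by simp
    finally show ?thesis
      by (simp add: d_def)
  qed
  have "measure_pmf.variance (apd_path p k) (Gamma_hat p k inT y)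
      = (\<Sum>j=1..k. \<Sum>q=1..k.
          measure_pmf.expectation (apd_path p k) (\<lambda>w. c j * Wi w j * (c q * Wi w q))
          - measure_pmf.expectation (apd_path p k) (\<lambda>w. c j * Wi w j)
            * measure_pmf.expectation (apd_path p k) (\<lambda>w. c q * Wi w q))"
    unfolding Gamma by (rule measure_pmf_variance_sum[OF finite_set_pmf_apd_path])
  also have "\<dots> = (\<Sum>j=1..k. \<Sum>q=1..k. c j * c q * (pr2 p k j q - r * r))"
    using assms(1,2)
    by (intro sum.cong refl)
      (simp add: mult_ac expectation_Wi expectation_Wi_Wi pr1_eq r_def right_diff_distrib)
  also have "\<dots> = (\<Sum>j=1..k. \<Sum>q=1..k. p ^ (max j q - min j q) * y j * y q / p)"
    by (intro sum.cong refl cov)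
  finally show ?thesis
    by (simp add: kms_form_def sum_divide_distrib)
qed

lemma expectation_sigma_hat:
  assumes "0 < p" "p < 1"
  shows "measure_pmf.expectation (apd_path p k) (sigma_hat p k y) = sigma_tilde p k y"
proof -
  have int: "integrable (measure_pmf (apd_path p k)) f" for f :: "bool list \<Rightarrow> real"
    by (rule integrable_measure_pmf_finite[OF finite_set_pmf_apd_path])
  have pr1: "pr1 p k j \<noteq> 0" if "j \<in> {1..k}" for j
    using pr1_eq[OF _ _ that] assms by simp
  have pr2: "pr2 p k j q \<noteq> 0" if "j \<in> {1..k-2}" "q \<in> {j+2..k}" for j q
  proof -
    have "0 < apd_trans p True (q - j)"
      using that by (intro apd_trans_True_pos[OF assms]) auto
    then show ?thesis
      using pr2_eq[of p j k q] assms that by auto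
  qed
  have "sigma_hat p k y = (\<lambda>w. (1 / p + 1) * (\<Sum>j=1..k. (y j)\<^sup>2 / pr1 p k j * Wi w j)
      + (\<Sum>j=2..k-1. (y j)\<^sup>2 / pr1 p k j * Wi w j)
      + 2 * (\<Sum>j=1..k-2. \<Sum>q=j+2..k. p ^ (q - j - 1) * y j * y q / pr2 p k j q * (Wi w j * Wi w q)))"
    by (simp add: sigma_hat_def fun_eq_iff mult_ac)
  then have "measure_pmf.expectation (apd_path p k) (sigma_hat p k y)
      = (1 / p + 1) * (\<Sum>j=1..k. (y j)\<^sup>2 / pr1 p k j * pr1 p k j)
      + (\<Sum>j=2..k-1. (y j)\<^sup>2 / pr1 p k j * pr1 p k j)
      + 2 * (\<Sum>j=1..k-2. \<Sum>q=j+2..k. p ^ (q - j - 1) * y j * y q / pr2 p k j q * pr2 p k j q)"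
    by (simp add: int integral_sum expectation_Wi expectation_Wi_Wi)
  also have "\<dots> = sigma_tilde p k y"
  proof -
    have "(\<Sum>j=1..k. (y j)\<^sup>2 / pr1 p k j * pr1 p k j) = (\<Sum>j=1..k. (y j)\<^sup>2)"
      "(\<Sum>j=2..k-1. (y j)\<^sup>2 / pr1 p k j * pr1 p k j) = (\<Sum>j=2..k-1. (y j)\<^sup>2)"
      using pr1 by (auto intro!: sum.cong)
    moreover have "(\<Sum>j=1..k-2. \<Sum>q=j+2..k. p ^ (q - j - 1) * y j * y q / pr2 p k j q * pr2 p k j q)
        = (\<Sum>j=1..k-2. \<Sum>q=j+2..k. p ^ (q - j - 1) * y j * y q)"
      using pr2 by (auto intro!: sum.cong)
    ultimately show ?thesis
      by (simp add: sigma_tilde_def)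
  qed
  finally show ?thesis .
qed

theorem proposition7:
  fixes p :: real and k :: nat and inT :: "nat \<Rightarrow> bool" and y :: "nat \<Rightarrow> real"
  assumes "0 < p" and "p < 1"
    and "1 \<le> k"
    and "\<And>j. 1 \<le> j \<Longrightarrow> j < k \<Longrightarrow> (inT (j + 1) \<longleftrightarrow> \<not> inT j)"
  shows "measure_pmf.variance (apd_path p k) (Gamma_hat p k inT y) \<le> sigma_tilde p k y
       \<and> measure_pmf.expectation (apd_path p k) (sigma_hat p k y) = sigma_tilde p k y"
proof
  have "measure_pmf.variance (apd_path p k) (Gamma_hat p k inT y) = kms_form p k y / p"
    using assms by (intro variance_Gamma_hat) auto
  also have "\<dots> \<le> sigma_tilde p k y"
    using kms_form_le_sigma_tilde[OF assms(1,3)] assms(1) by (simp add: pos_divide_le_eq mult.commute)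
  finally show "measure_pmf.variance (apd_path p k) (Gamma_hat p k inT y) \<le> sigma_tilde p k y" .
  show "measure_pmf.expectation (apd_path p k) (sigma_hat p k y) = sigma_tilde p k y"
    using assms(1,2) by (rule expectation_sigma_hat)
qed

end
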